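(* Let $\mathcal{L}_{ED}:=\{L_{\varepsilon,\delta}:\varepsilon\ge0,\delta\in[0,1]\}$. There exist $\varepsilon\ge0$ and $\delta\in[0,1]$ such that, with budget $B:=L_{\varepsilon,\delta}\in\mathcal{L}_{ED}$, the natural filter with queries in $\mathcal{L}_{ED}$ and query capacity $k=2$ is not free, i.e. $\mathrm{PLD}(\mathrm{Filter}_{\mathcal{L}_{ED},B,2})\not\preceq B$.
   Context: For $\varepsilon\ge0,\delta\in[0,1]$, $f_{\varepsilon,\delta}(\alpha):=\max\{0,1-\delta-e^\varepsilon\alpha,e^{-\varepsilon}(1-\delta-\alpha)\}$, and $L_{\varepsilon,\delta}$ is the PLD whose tradeoff curve is $f_{\varepsilon,\delta}$ (the tradeoff curve of a pair $(P,Q)$ being $\alpha\mapsto\inf\{\beta_\phi:\alpha_\phi\le\alpha\}$ over tests with Type I error under $P$ and Type II error under $Q$). A PLD is the law of $\log\frac{dP}{dQ}(\omega)$, $\omega\sim P$; $\mathrm{Id}=L_{0,0}$ is the point mass at 0. Fix datasets $D_1,D_2$; $\mathrm{PLD}(M):=\mathrm{PLD}(M(D_1)\|M(D_2))$; $\preceq$ is the Blackwell order on PLDs, $\oplus$ convolution, $\sup$ least upper bound. A privacy rule of length $k$ maps sequences $(L_1,\dots,L_{k'})$, $0\le k'<k$, to sets of PLDs containing $\mathrm{Id}$; a $\Gamma$-adversary is an adaptive composition $M_1\otimes\cdots\otimes M_k$ with $\mathrm{PLD}(M_i(\cdot;y_{<i}))\in\Gamma(L_1,\dots,L_{i-1})$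 for every history of outputs; $\mathrm{PLD}(\Gamma)$ is the sup over $\Gamma$-adversaries. $\mathrm{Filter}_{\mathcal{L},B,k}(L_1,\dots,L_{k'}):=\{L\in\mathcal{L}:L_1\oplus\cdots\oplus L_{k'}\oplus L\preceq B\}$; the natural filter is free for $(\mathcal{L},B,k)$ if $\mathrm{PLD}(\mathrm{Filter}_{\mathcal{L},B,k})\preceq B$. *)

theory Defs
  imports "HOL-Probability.Probability"
begin

text \<open>Everything is for fixed datasets D1, D2: a mechanism is represented by the pair
(P, Q) of its output distributions on D1 and D2.  Output spaces are discrete.\<close>

definition tradeoff :: "'a pmf \<Rightarrow> 'a pmf \<Rightarrow> real \<Rightarrow> real" where
  "tradeoff P Q \<alpha> = Inf {1 - measure_pmf.expectation Q \<phi> | \<phi>.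
      (\<forall>x. 0 \<le> \<phi> x \<and> \<phi> x \<le> 1) \<and> measure_pmf.expectation P \<phi> \<le> \<alpha>}"

definition f_ED :: "real \<Rightarrow> real \<Rightarrow> real \<Rightarrow> real" where
  "f_ED \<epsilon> \<delta> \<alpha> = max 0 (max (1 - \<delta> - exp \<epsilon> * \<alpha>) (exp (- \<epsilon>) * (1 - \<delta> - \<alpha>)))"

text \<open>PLD(P||Q) \<preceq> L, where L is the PLD with tradeoff curve g (Blackwell order,
via Blackwell's theorem: pointwise comparison of tradeoff curves on [0,1]).\<close>
definition pld_le :: "'a pmf \<Rightarrow> 'a pmf \<Rightarrow> (real \<Rightarrow> real) \<Rightarrow> bool" where
  "pld_le P Q g \<longleftrightarrow> (\<forall>\<alpha>\<in>{0..1}. g \<alpha> \<le> tradeoff P Q \<alpha>)"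

definition pld_is_ED :: "'a pmf \<Rightarrow> 'a pmf \<Rightarrow> real \<Rightarrow> real \<Rightarrow> bool" where
  "pld_is_ED P Q \<epsilon> \<delta> \<longleftrightarrow> 0 \<le> \<epsilon> \<and> 0 \<le> \<delta> \<and> \<delta> \<le> 1 \<and>
      (\<forall>\<alpha>\<in>{0..1}. tradeoff P Q \<alpha> = f_ED \<epsilon> \<delta> \<alpha>)"

definition pld_in_LED :: "'a pmf \<Rightarrow> 'a pmf \<Rightarrow> bool" where
  "pld_in_LED P Q \<longleftrightarrow> (\<exists>\<epsilon> \<delta>. pld_is_ED P Q \<epsilon> \<delta>)"

definition adaptive_comp :: "'a pmf \<Rightarrow> ('a \<Rightarrow> 'b pmf) \<Rightarrow> ('a \<times> 'b) pmf" where
  "adaptive_comp P1 P2 = bind_pmf P1 (\<lambda>y. map_pmf (Pair y) (P2 y))"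

text \<open>A Filter_{L_ED,B,2}-adversary with B = L_{eps,delta}:
first query PLD(M1) \<in> L_ED with PLD(M1) \<preceq> B;
for every output y1, PLD(M2(.;y1)) \<in> L_ED with PLD(M1) \<oplus> PLD(M2(.;y1)) \<preceq> B
(convolution of PLDs = PLD of the independent product pair).\<close>
definition filter_adversary ::
  "real \<Rightarrow> real \<Rightarrow> nat pmf \<Rightarrow> nat pmf \<Rightarrow> (nat \<Rightarrow> nat pmf) \<Rightarrow> (nat \<Rightarrow> nat pmf) \<Rightarrow> bool" where
  "filter_adversary \<epsilon> \<delta> P1 Q1 P2 Q2 \<longleftrightarrow>
     pld_in_LED P1 Q1 \<and> pld_le P1 Q1 (f_ED \<epsilon> \<delta>) \<and>
     (\<forall>y. pld_in_LED (P2 y) (Q2 y) \<and>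
          pld_le (pair_pmf P1 (P2 y)) (pair_pmf Q1 (Q2 y)) (f_ED \<epsilon> \<delta>))"

text \<open>The natural filter is free for (L_ED, L_{eps,delta}, 2): the sup of the PLDs of all
filter adversaries is \<preceq> B, i.e. (least upper bound) every such PLD is \<preceq> B.\<close>
definition natural_filter_free_ED2 :: "real \<Rightarrow> real \<Rightarrow> bool" where
  "natural_filter_free_ED2 \<epsilon> \<delta> \<longleftrightarrow>
     (\<forall>P1 Q1 P2 Q2. filter_adversary \<epsilon> \<delta> P1 Q1 P2 Q2 \<longrightarrow>
        pld_le (adaptive_comp P1 P2) (adaptive_comp Q1 Q2) (f_ED \<epsilon> \<delta>))"

end

theory Submission
  imports Defs
begin

text \<open>Take the budget \<open>B = L(ln 3, 3/8)\<close>. The adversary first asks a randomized response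
  query \<open>L(ln 3, 0)\<close>; on output 0 it asks a second randomized response, on output 1 a query
  \<open>L(0, 3/8)\<close> that reveals the dataset with probability 3/8. Both possible products have
  hockey-stick divergence exactly 3/8 at \<open>e\<^sup>\<epsilon> = 3\<close>, so the filter admits both. But the
  adaptive composition is a mixture of the two that the filter never compares with \<open>B\<close>: the
  test rejecting when the second output is nonzero has Type I error 11/32 and Type II error
  \<open>1/16 < 3/32 = f(ln 3, 3/8)(11/32)\<close>.\<close>

abbreviation is_test :: "('a \<Rightarrow> real) \<Rightarrow> bool" where
  "is_test \<phi> \<equiv> \<forall>x. 0 \<le> \<phi> x \<and> \<phi> x \<le> 1"

lemma expectation_test_le_1:
  assumes "is_test \<phi>"
  shows "measure_pmf.expectation M \<phi> \<le> 1"
proof -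
  have "measure_pmf.expectation M \<phi> \<le> measure_pmf.expectation M (\<lambda>_. 1)"
    using assms by (intro integral_mono measure_pmf.integrable_const_bound[where B=1]) auto
  then show ?thesis by simp
qed

lemma expectation_complement_test:
  assumes "is_test \<phi>"
  shows "measure_pmf.expectation M (\<lambda>x. 1 - \<phi> x) = 1 - measure_pmf.expectation M \<phi>"
  using assms
  by (simp add: Bochner_Integration.integral_diff measure_pmf.integrable_const_bound[where B=1]
      measure_pmf.prob_space)

lemma tradeoff_le_test:
  assumes "is_test \<phi>" "measure_pmf.expectation P \<phi> \<le> \<alpha>"
  shows "tradeoff P Q \<alpha> \<le> 1 - measure_pmf.expectation Q \<phi>"
  unfolding tradeoff_def
proof (rule cInf_lower)
  show "bdd_below {1 - measure_pmf.expectation Q \<phi> | \<phi>.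
      is_test \<phi> \<and> measure_pmf.expectation P \<phi> \<le> \<alpha>}"
    by (rule bdd_belowI[where m=0]) (auto dest: expectation_test_le_1[where M=Q])
qed (use assms in blast)

definition indist :: "'a pmf \<Rightarrow> 'a pmf \<Rightarrow> real \<Rightarrow> real \<Rightarrow> bool" where
  "indist P Q \<epsilon> \<delta> \<longleftrightarrow> (\<forall>\<phi>. is_test \<phi> \<longrightarrow>
     measure_pmf.expectation P \<phi> \<le> exp \<epsilon> * measure_pmf.expectation Q \<phi> + \<delta> \<and>
     measure_pmf.expectation Q \<phi> \<le> exp \<epsilon> * measure_pmf.expectation P \<phi> + \<delta>)"

lemma indist_mono: "indist P Q \<epsilon> \<delta> \<Longrightarrow> \<delta> \<le> \<delta>' \<Longrightarrow> indist P Q \<epsilon> \<delta>'"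
  unfolding indist_def by (meson add_left_mono order_trans)

lemma pld_le_f_ED_if_indist:
  assumes "indist P Q \<epsilon> \<delta>"
  shows "pld_le P Q (f_ED \<epsilon> \<delta>)"
  unfolding pld_le_def tradeoff_def
proof (intro ballI cInf_greatest)
  fix \<alpha> :: real assume "\<alpha> \<in> {0..1}"
  then show "{1 - measure_pmf.expectation Q \<phi> | \<phi>.
      is_test \<phi> \<and> measure_pmf.expectation P \<phi> \<le> \<alpha>} \<noteq> {}"
    by (auto intro!: exI[where x="\<lambda>_. 0"])
next
  fix \<alpha> t assume "t \<in> {1 - measure_pmf.expectation Q \<phi> | \<phi>.
      is_test \<phi> \<and> measure_pmf.expectation P \<phi> \<le> \<alpha>}"
  then obtain \<phi> where t: "t = 1 - measure_pmf.expectation Q \<phi>" and test: "is_test \<phi>"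
    and type1: "measure_pmf.expectation P \<phi> \<le> \<alpha>" by blast
  have "is_test (\<lambda>x. 1 - \<phi> x)"
    using test by auto
  \<comment> \<open>the second bound of \<open>f_ED\<close> comes from the complementary test \<open>1 - \<phi>\<close>\<close>
  then have "1 - measure_pmf.expectation P \<phi> \<le> exp \<epsilon> * t + \<delta>"
    using assms test unfolding indist_def t by (metis expectation_complement_test)
  then have "1 - \<delta> - \<alpha> \<le> exp \<epsilon> * t"
    using type1 by linarith
  then have lower_ratio: "exp (- \<epsilon>) * (1 - \<delta> - \<alpha>) \<le> t"
    by (simp add: exp_minus field_simps)
  have "measure_pmf.expectation Q \<phi> \<le> exp \<epsilon> * \<alpha> + \<delta>"
    using assms test type1 unfolding indist_def
    by (smt (verit) exp_gt_zero mult_left_mono)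
  then show "f_ED \<epsilon> \<delta> \<alpha> \<le> t"
    using lower_ratio expectation_test_le_1[OF test, of Q]
    unfolding f_ED_def t by auto
qed

lemma expectation_finite_support:
  assumes "finite A" "\<And>x. x \<notin> A \<Longrightarrow> pmf M x = 0"
  shows "measure_pmf.expectation M (\<phi> :: _ \<Rightarrow> real) = (\<Sum>a\<in>A. \<phi> a * pmf M a)"
  using assms by (intro integral_measure_pmf_real) (auto simp: set_pmf_eq)

lemma expectation_diff_le_hockey_stick:
  assumes "finite A" "\<And>x. x \<notin> A \<Longrightarrow> pmf P x = 0" "\<And>x. x \<notin> A \<Longrightarrow> pmf Q x = 0"
    and "is_test \<phi>"
  shows "measure_pmf.expectation P \<phi> - c * measure_pmf.expectation Q \<phi>
    \<le> (\<Sum>x\<in>A. max 0 (pmf P x - c * pmf Q x))"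
proof -
  have "measure_pmf.expectation P \<phi> - c * measure_pmf.expectation Q \<phi>
      = (\<Sum>x\<in>A. \<phi> x * (pmf P x - c * pmf Q x))"
    using assms by (simp add: expectation_finite_support sum_distrib_left sum_subtractf algebra_simps)
  also have "\<dots> \<le> (\<Sum>x\<in>A. max 0 (pmf P x - c * pmf Q x))"
  proof (rule sum_mono)
    fix x
    have "0 \<le> \<phi> x" "\<phi> x \<le> 1" using \<open>is_test \<phi>\<close> by auto
    then show "\<phi> x * (pmf P x - c * pmf Q x) \<le> max 0 (pmf P x - c * pmf Q x)"
      by (cases "pmf P x - c * pmf Q x \<ge> 0")
        (auto intro: mult_left_le_one_le simp: mult_nonneg_nonpos)
  qed
  finally show ?thesis .
qed

lemma indist_if_hockey_stick_le:
  assumes "finite A" "\<And>x. x \<notin> A \<Longrightarrow> pmf P x = 0" "\<And>x. x \<notin> A \<Longrightarrow> pmf Q x = 0"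
    and "(\<Sum>x\<in>A. max 0 (pmf P x - exp \<epsilon> * pmf Q x)) \<le> \<delta>"
    and "(\<Sum>x\<in>A. max 0 (pmf Q x - exp \<epsilon> * pmf P x)) \<le> \<delta>"
  shows "indist P Q \<epsilon> \<delta>"
  unfolding indist_def
  using expectation_diff_le_hockey_stick[OF assms(1,2,3), of _ "exp \<epsilon>"]
    expectation_diff_le_hockey_stick[OF assms(1,3,2), of _ "exp \<epsilon>"] assms(4,5)
  by (smt (verit))

lemma pld_is_EDI:
  assumes "0 \<le> \<epsilon>" "0 \<le> \<delta>" "\<delta> \<le> 1" "indist P Q \<epsilon> \<delta>"
    and "\<And>\<alpha>. \<alpha> \<in> {0..1} \<Longrightarrow> tradeoff P Q \<alpha> \<le> f_ED \<epsilon> \<delta> \<alpha>"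
  shows "pld_is_ED P Q \<epsilon> \<delta>"
  using assms pld_le_f_ED_if_indist[OF assms(4)]
  unfolding pld_is_ED_def pld_le_def by (auto intro: order.antisym)

lemma pmf_adaptive_comp: "pmf (adaptive_comp P1 P2) (a, b) = pmf P1 a * pmf (P2 a) b"
proof -
  have pmf_map_Pair: "pmf (map_pmf (Pair y) M) (a, b) = (if a = y then pmf M b else 0)"
    for y and M :: "'b pmf"
  proof (cases "a = y")
    case True
    then show ?thesis by (simp add: pmf_map_inj' inj_on_def)
  next
    case False
    then have "(a, b) \<notin> set_pmf (map_pmf (Pair y) M)" by auto
    then show ?thesis using False by (simp add: set_pmf_eq)
  qed
  have "pmf (adaptive_comp P1 P2) (a, b)
      = measure_pmf.expectation P1 (\<lambda>y. if a = y then pmf (P2 y) b else 0)"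
    unfolding adaptive_comp_def pmf_bind pmf_map_Pair ..
  also have "\<dots> = (\<Sum>y\<in>{a}. (if a = y then pmf (P2 y) b else 0) * pmf P1 y)"
    by (intro integral_measure_pmf_real) (auto split: if_splits)
  finally show ?thesis by simp
qed

text \<open>Randomized response with \<open>e\<^sup>\<epsilon> = 3\<close>, and the query \<open>L(0, 3/8)\<close> that outputs the
  dataset's label (0 or 2) with probability 3/8 and 1 otherwise.\<close>

definition "rr_P = pmf_of_list [(0::nat, 3/4::real), (1, 1/4)]"
definition "rr_Q = pmf_of_list [(0::nat, 1/4::real), (1, 3/4)]"
definition "reveal_P = pmf_of_list [(0::nat, 3/8::real), (1, 5/8)]"
definition "reveal_Q = pmf_of_list [(2::nat, 3/8::real), (1, 5/8)]"

lemma pmf_rr_P: "pmf rr_P x = (if x = 0 then 3/4 else if x = 1 then 1/4 else 0)"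
  unfolding rr_P_def by (subst pmf_pmf_of_list) (auto simp: pmf_of_list_wf_def)

lemma pmf_rr_Q: "pmf rr_Q x = (if x = 0 then 1/4 else if x = 1 then 3/4 else 0)"
  unfolding rr_Q_def by (subst pmf_pmf_of_list) (auto simp: pmf_of_list_wf_def)

lemma pmf_reveal_P: "pmf reveal_P x = (if x = 0 then 3/8 else if x = 1 then 5/8 else 0)"
  unfolding reveal_P_def by (subst pmf_pmf_of_list) (auto simp: pmf_of_list_wf_def)

lemma pmf_reveal_Q: "pmf reveal_Q x = (if x = 2 then 3/8 else if x = 1 then 5/8 else 0)"
  unfolding reveal_Q_def by (subst pmf_pmf_of_list) (auto simp: pmf_of_list_wf_def)

lemma expectation_rr_P:
  "measure_pmf.expectation rr_P (\<phi> :: nat \<Rightarrow> real) = 3/4 * \<phi> 0 + 1/4 * \<phi> 1"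
  by (subst expectation_finite_support[where A="{0,1}"]) (auto simp: pmf_rr_P)

lemma expectation_rr_Q:
  "measure_pmf.expectation rr_Q (\<phi> :: nat \<Rightarrow> real) = 1/4 * \<phi> 0 + 3/4 * \<phi> 1"
  by (subst expectation_finite_support[where A="{0,1}"]) (auto simp: pmf_rr_Q)

lemma expectation_reveal_P:
  "measure_pmf.expectation reveal_P (\<phi> :: nat \<Rightarrow> real) = 3/8 * \<phi> 0 + 5/8 * \<phi> 1"
  by (subst expectation_finite_support[where A="{0,1}"]) (auto simp: pmf_reveal_P)

lemma expectation_reveal_Q:
  "measure_pmf.expectation reveal_Q (\<phi> :: nat \<Rightarrow> real) = 3/8 * \<phi> 2 + 5/8 * \<phi> 1"
  by (subst expectation_finite_support[where A="{2,1}"]) (auto simp: pmf_reveal_Q)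

lemma f_ED_ln_3: "f_ED (ln 3) \<delta> \<alpha> = max 0 (max (1 - \<delta> - 3 * \<alpha>) ((1 - \<delta> - \<alpha>) / 3))"
  by (simp add: f_ED_def exp_minus field_simps)

lemma indist_rr: "indist rr_P rr_Q (ln 3) 0"
  by (rule indist_if_hockey_stick_le[where A="{0,1}"]) (auto simp: pmf_rr_P pmf_rr_Q)

lemma pld_is_ED_rr: "pld_is_ED rr_P rr_Q (ln 3) 0"
proof (rule pld_is_EDI[OF _ _ _ indist_rr])
  fix \<alpha> :: real assume \<alpha>: "\<alpha> \<in> {0..1}"
  show "tradeoff rr_P rr_Q \<alpha> \<le> f_ED (ln 3) 0 \<alpha>"
  proof (cases "\<alpha> \<le> 1/4")
    case True
    let ?\<phi> = "\<lambda>x. if x = 1 then 4 * \<alpha> else 0"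
    have "tradeoff rr_P rr_Q \<alpha> \<le> 1 - measure_pmf.expectation rr_Q ?\<phi>"
      using \<alpha> True by (intro tradeoff_le_test) (auto simp: expectation_rr_P)
    then show ?thesis by (simp add: expectation_rr_Q f_ED_ln_3)
  next
    case False
    let ?\<phi> = "\<lambda>x. if x = 1 then 1 else if x = 0 then (\<alpha> - 1/4) * 4 / 3 else 0"
    have "tradeoff rr_P rr_Q \<alpha> \<le> 1 - measure_pmf.expectation rr_Q ?\<phi>"
      using \<alpha> False by (intro tradeoff_le_test) (auto simp: expectation_rr_P field_simps)
    then show ?thesis using \<alpha> False by (auto simp: expectation_rr_Q f_ED_ln_3 field_simps)
  qed
qed auto

lemma pld_is_ED_reveal: "pld_is_ED reveal_P reveal_Q 0 (3/8)"
proof (rule pld_is_EDI)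
  show "indist reveal_P reveal_Q 0 (3/8)"
    by (rule indist_if_hockey_stick_le[where A="{0,1,2}"]) (auto simp: pmf_reveal_P pmf_reveal_Q)
next
  fix \<alpha> :: real assume \<alpha>: "\<alpha> \<in> {0..1}"
  let ?\<phi> = "\<lambda>x. if x = 2 then 1 else if x = 1 then min 1 (\<alpha> * 8 / 5) else 0"
  have "tradeoff reveal_P reveal_Q \<alpha> \<le> 1 - measure_pmf.expectation reveal_Q ?\<phi>"
    using \<alpha> by (intro tradeoff_le_test) (auto simp: expectation_reveal_P min_def)
  then show "tradeoff reveal_P reveal_Q \<alpha> \<le> f_ED 0 (3/8) \<alpha>"
    using \<alpha> by (auto simp: expectation_reveal_Q f_ED_def min_def split: if_splits)
qed auto

definition "second_P y = (if y = 0 then rr_P else reveal_P)"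
definition "second_Q y = (if y = 0 then rr_Q else reveal_Q)"

lemma filter_adversary_rr_reveal: "filter_adversary (ln 3) (3/8) rr_P rr_Q second_P second_Q"
  unfolding filter_adversary_def
proof (intro conjI allI)
  show "pld_in_LED rr_P rr_Q"
    using pld_is_ED_rr unfolding pld_in_LED_def by blast
  show "pld_le rr_P rr_Q (f_ED (ln 3) (3/8))"
    by (intro pld_le_f_ED_if_indist indist_mono[OF indist_rr]) simp
  fix y
  show "pld_in_LED (second_P y) (second_Q y)"
    using pld_is_ED_rr pld_is_ED_reveal unfolding pld_in_LED_def second_P_def second_Q_def by auto
  show "pld_le (pair_pmf rr_P (second_P y)) (pair_pmf rr_Q (second_Q y)) (f_ED (ln 3) (3/8))"
    by (intro pld_le_f_ED_if_indist indist_if_hockey_stick_le[where A="{0,1}\<times>{0,1,2}"])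
      (auto simp: second_P_def second_Q_def pmf_pair pmf_rr_P pmf_rr_Q pmf_reveal_P pmf_reveal_Q
        sum.cartesian_product[symmetric] split: if_splits)
qed

lemma not_pld_le_adaptive_comp_rr_reveal:
  "\<not> pld_le (adaptive_comp rr_P second_P) (adaptive_comp rr_Q second_Q) (f_ED (ln 3) (3/8))"
proof
  let ?P = "adaptive_comp rr_P second_P" and ?Q = "adaptive_comp rr_Q second_Q"
  let ?\<phi> = "\<lambda>(a::nat, b::nat). if b = 0 then 0 else 1 :: real"
  have type1: "measure_pmf.expectation ?P ?\<phi> = 11/32"
    by (subst expectation_finite_support[where A="{0,1}\<times>{0,1}"])
      (auto simp: pmf_adaptive_comp pmf_rr_P pmf_reveal_P second_P_def split: if_splits)
  have type2: "1 - measure_pmf.expectation ?Q ?\<phi> = 1/16"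
    by (subst expectation_finite_support[where A="{0,1}\<times>{0,1,2}"])
      (auto simp: pmf_adaptive_comp pmf_rr_Q pmf_reveal_Q second_Q_def split: if_splits)
  assume "pld_le ?P ?Q (f_ED (ln 3) (3/8))"
  then have "f_ED (ln 3) (3/8) (11/32) \<le> tradeoff ?P ?Q (11/32)"
    unfolding pld_le_def by simp
  also have "\<dots> \<le> 1/16"
    using tradeoff_le_test[of ?\<phi> ?P "11/32" ?Q] type1 type2 by auto
  finally show False
    by (simp add: f_ED_ln_3)
qed

theorem corollary5p3:
  shows "\<exists>\<epsilon> \<delta>::real. 0 \<le> \<epsilon> \<and> 0 \<le> \<delta> \<and> \<delta> \<le> 1 \<and> \<not> natural_filter_free_ED2 \<epsilon> \<delta>"
proof (intro exI conjI)
  show "\<not> natural_filter_free_ED2 (ln 3) (3/8)"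
    unfolding natural_filter_free_ED2_def
    using filter_adversary_rr_reveal not_pld_le_adaptive_comp_rr_reveal by blast
qed auto

end
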